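(* Let $T>0$ and $G\subset\mathbb{R}^d$ a bounded domain with $C^3$ boundary and unit inward normal $\nu$. Let $b:[0,T]\times\bar G\times\mathcal P(\bar G)\to\mathbb{R}^d$, $\sigma:[0,T]\times\bar G\times\mathcal P(\bar G)\to\mathbb{R}^{d\times d}$ be continuous in $t$ and suppose there are $L>0$ and continuous functions $\phi_j:[0,T]\times\bar G\times\bar G\to\mathbb{R}$, $j=1,\dots,J$, with $|\phi_j(t,x,y)-\phi_j(t,x,z)|\le C|y-z|$, such that for all $t$, $x,y\in\bar G$, $\mu_1,\mu_2\in\mathcal P(\bar G)$, $$|b(t,x,\mu_1)-b(t,y,\mu_2)|+|\sigma(t,x,\mu_1)-\sigma(t,y,\mu_2)|\le L\Big(|x-y|+\sum_{j=1}^J\Big|\int_{\bar G}\phi_j(t,x,z)\,d\mu_1(z)-\int_{\bar G}\phi_j(t,x,z)\,d\mu_2(z)\Big|\Big).$$ Let $W^1,\dots,W^N$ be independent standard $d$-dimensional Wiener processes, let $X^1(0),\dots,X^N(0)$ be i.i.d. $\bar G$-valued, independent of the $W^i$. Let $X^i$ be the solution of the reflected McKean–Vlasov SDE $$X^i(t)=X^i(0)+\int_0^t b(s,X^i(s),\mathcal L^X_s)ds+\int_0^t\sigma(s,X^i(s),\mathcal L^X_s)dW^i(s)+\int_0^t\nu(X^i(s))\,dL^i(s)$$ (with $X^i(t)\in\bar G$ and $L^i$ non-decreasing, $L^i(0)=0$, increasing only when $X^i\in\partial G$), where $\mathcal L^X_s$ is the common law of $X^i(s)$; and let $X^{i,N}$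 solve the interacting particle system $$X^{i,N}(t)=X^i(0)+\int_0^t b(s,X^{i,N}(s),\hat\mu_{\mathbf X^N(s)})ds+\int_0^t\sigma(s,X^{i,N}(s),\hat\mu_{\mathbf X^N(s)})dW^i(s)+\int_0^t\nu(X^{i,N}(s))\,dL^{i,N}(s)$$ with analogous reflection terms. Then there is $C>0$ independent of $N$ such that for all $t\in[0,T]$ and $i=1,\dots,N$: $$\mathbb E|b(t,X^{i,N}(t),\hat\mu_{\mathbf X^N(t)})-b(t,X^i(t),\hat\mu_{\mathbf X(t)})|^4+\mathbb E|\sigma(t,X^{i,N}(t),\hat\mu_{\mathbf X^N(t)})-\sigma(t,X^i(t),\hat\mu_{\mathbf X(t)})|^4\le C\Big(\mathbb E|X^{i,N}(t)-X^i(t)|^4+\frac1N\sum_{j=1}^N\mathbb E|X^{j,N}(t)-X^j(t)|^4\Big),$$ and $$\mathbb E|b(t,X^i(t),\hat\mu_{\mathbf X(t)})-b(t,X^i(t),\mathcal L^X_t)|^4+\mathbb E|\sigma(t,X^i(t),\hat\mu_{\mathbf X(t)})-\sigma(t,X^i(t),\mathcal L^X_t)|^4\le\frac{C}{N^2}.$$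
   Context: $\mathbf X^N(t)=(X^{1,N}(t),\dots,X^{N,N}(t))$, $\mathbf X(t)=(X^1(t),\dots,X^N(t))$, and for $Z=(Z^1,\dots,Z^N)$, $\hat\mu_Z=\frac1N\sum_{i=1}^N\delta_{Z^i}$ is the empirical measure. $\mathcal P(\bar G)$ is the set of Borel probability measures on $\bar G$. *)

theory Defs
  imports "HOL-Probability.Probability"
begin

text \<open>Borel probability measures on a set S (here S = closure G), represented as
  Borel probability measures on the ambient space giving full mass to S.\<close>
definition prob_on :: "'a::topological_space set \<Rightarrow> 'a measure set" where
  "prob_on S = {\<mu>. prob_space \<mu> \<and> sets \<mu> = sets borel \<and> emeasure \<mu> S = 1}"

text \<open>Empirical measure (1/N) sum_{i=1}^N delta_{Z i}: push-forward of the uniform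
  distribution on the indices 1..N under Z.\<close>
definition empirical :: "nat \<Rightarrow> (nat \<Rightarrow> 'a::topological_space) \<Rightarrow> 'a measure" where
  "empirical N Z = distr (measure_pmf (pmf_of_set {1..N})) borel Z"

end

theory Submission
  imports Defs
begin

(* Both estimates are pointwise in t. By the Lipschitz hypothesis the two coefficient differences
   are controlled by L times the distance of the spatial arguments plus the differences of the
   integrals of the phi_j against the two measures.

   For two empirical measures with atoms Y_k and Z_k these integral differences are at most the
   Lipschitz constant of phi_j times the mean distance (1/N) sum_k |Y_k - Z_k|, and the power-mean
   inequality turns the fourth power of that mean into the mean of the fourth powers.

   Against the common law mu of the i.i.d. X_k the difference is a centred mean (1/N) sum_k Y_k,
   Y_k = phi(X_i, X_k) - int phi(X_i, z) dmu(z). In the expansion of its fourth power a term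
   E[Y_a Y_b Y_c Y_d] vanishes as soon as some index other than i occurs only once, because
   integrating out that independent X_a first gives zero. At most 7 N^2 of the N^4 index
   quadruples remain, each term is bounded by (2K)^4, so the fourth moment is O(1/N^2). *)

lemma power_mean_le_mean_power:
  fixes x :: "'i \<Rightarrow> real"
  assumes "finite F" "F \<noteq> {}" "even n"
  shows "((\<Sum>k\<in>F. x k) / card F) ^ n \<le> (\<Sum>k\<in>F. x k ^ n) / card F"
proof -
  have "(\<Sum>k\<in>F. (1 / card F) *\<^sub>R x k) ^ n \<le> (\<Sum>k\<in>F. (1 / card F) * x k ^ n)"
    using assms by (intro convex_on_sum[OF _ _ convex_power_even]) auto
  then show ?thesis
    by (simp add: sum_distrib_right[symmetric] sum_distrib_left[symmetric] divide_inverse mult.commute)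
qed

lemma sum_power_le_card_power_sum:
  fixes x :: "'i \<Rightarrow> real"
  assumes "finite F" "even n" "0 < n"
  shows "(\<Sum>k\<in>F. x k) ^ n \<le> real (card F) ^ (n - 1) * (\<Sum>k\<in>F. x k ^ n)"
proof (cases "F = {}")
  case False
  then have c: "0 < real (card F)" using assms(1) by (simp add: card_gt_0_iff)
  have "(\<Sum>k\<in>F. x k) ^ n / real (card F) ^ n \<le> (\<Sum>k\<in>F. x k ^ n) / card F"
    using power_mean_le_mean_power[OF assms(1) False assms(2)] by (simp add: power_divide)
  then have "(\<Sum>k\<in>F. x k) ^ n \<le> (\<Sum>k\<in>F. x k ^ n) / card F * real (card F) ^ n"
    using c by (simp add: divide_le_eq)
  also have "\<dots> = real (card F) ^ (n - 1) * (\<Sum>k\<in>F. x k ^ n)"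
    using c \<open>0 < n\<close> by (simp add: power_eq_if[of "real (card F)" n] field_simps)
  finally show ?thesis .
qed (use assms in \<open>simp add: power_0_left\<close>)

lemma abs_mult4_le:
  fixes x1 x2 x3 x4 :: "'a::linordered_idom"
  assumes "\<bar>x1\<bar> \<le> B" "\<bar>x2\<bar> \<le> B" "\<bar>x3\<bar> \<le> B" "\<bar>x4\<bar> \<le> B"
  shows "\<bar>x1 * x2 * x3 * x4\<bar> \<le> B ^ 4"
proof -
  have "0 \<le> B" using assms(1) by (meson abs_ge_zero order.trans)
  then show ?thesis
    using assms by (simp add: abs_mult power4_eq_xxxx mult_mono mult_nonneg_nonneg)
qed

lemma power4_add_le: "((a::real) + b) ^ 4 \<le> 8 * (a ^ 4 + b ^ 4)"
  using sum_power_le_card_power_sum[of "{0::nat, 1}" 4 "\<lambda>k. if k = 0 then a else b"] by simp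

lemma power4_sum_expand:
  fixes Y :: "'i \<Rightarrow> real"
  shows "(\<Sum>k\<in>F. Y k) ^ 4 = (\<Sum>(a, b, c, d)\<in>F \<times> F \<times> F \<times> F. Y a * Y b * Y c * Y d)"
proof -
  have "(\<Sum>k\<in>F. Y k) ^ 4 = (\<Sum>a\<in>F. \<Sum>b\<in>F. \<Sum>c\<in>F. \<Sum>d\<in>F. Y a * Y b * Y c * Y d)"
    by (simp add: power4_eq_xxxx sum_distrib_left sum_distrib_right ac_simps)
  then show ?thesis
    by (simp add: sum.cartesian_product)
qed

section \<open>Measures carried by a set and empirical measures\<close>

lemma (in prob_space) distr_in_prob_on:
  assumes "random_variable borel Y" "\<And>\<omega>. \<omega> \<in> space M \<Longrightarrow> Y \<omega> \<in> S" "S \<in> sets borel"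
  shows "distr M borel Y \<in> prob_on S"
proof -
  have "Y -` S \<inter> space M = space M" using assms(2) by auto
  then show ?thesis
    using assms by (auto simp: prob_on_def prob_space_distr emeasure_distr emeasure_space_1)
qed

lemma empirical_in_prob_on:
  assumes "1 \<le> N" "\<And>k. k \<in> {1..N} \<Longrightarrow> Z k \<in> S" "S \<in> sets borel"
  shows "empirical N Z \<in> prob_on S"
proof -
  have "emeasure (measure_pmf (pmf_of_set {1..N})) (Z -` S) = 1"
    using assms by (intro measure_pmf.emeasure_eq_1_AE) (auto simp: AE_measure_pmf_iff)
  then show ?thesis
    using assms by (auto simp: prob_on_def empirical_def measure_pmf.prob_space_distr emeasure_distr)
qed

lemma integral_empirical:
  fixes f :: "'a::topological_space \<Rightarrow> real"
  assumes "1 \<le> N" "f \<in> borel_measurable borel"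
  shows "(\<integral>z. f z \<partial>empirical N Z) = (\<Sum>k=1..N. f (Z k)) / N"
proof -
  have "(\<integral>z. f z \<partial>empirical N Z) = (\<integral>k. f (Z k) \<partial>measure_pmf (pmf_of_set {1..N}))"
    unfolding empirical_def using assms by (intro integral_distr) auto
  also have "\<dots> = (\<Sum>k=1..N. f (Z k)) / N"
    using assms by (subst integral_pmf_of_set) auto
  finally show ?thesis .
qed

text \<open>If f is not Borel measurable, both integrals on the left are the junk value 0; otherwise f and
  its truncation to S agree almost everywhere for measures carried by S. This lets a function that
  is only continuous on S be replaced by a Borel measurable one.\<close>
lemma abs_integral_diff_le_indicator:
  fixes f :: "'a::topological_space \<Rightarrow> real"
  assumes "\<mu>1 \<in> prob_on S" "\<mu>2 \<in> prob_on S"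
  shows "\<bar>(\<integral>z. f z \<partial>\<mu>1) - (\<integral>z. f z \<partial>\<mu>2)\<bar>
    \<le> \<bar>(\<integral>z. indicator S z * f z \<partial>\<mu>1) - (\<integral>z. indicator S z * f z \<partial>\<mu>2)\<bar>"
proof (cases "f \<in> borel_measurable borel")
  case True
  have "(\<integral>z. f z \<partial>\<mu>) = (\<integral>z. indicator S z * f z \<partial>\<mu>)" if "\<mu> \<in> prob_on S" for \<mu>
  proof -
    interpret prob_space \<mu> using that by (simp add: prob_on_def)
    have sets: "sets \<mu> = sets borel" and S: "emeasure \<mu> S = 1"
      using that by (auto simp: prob_on_def)
    then have "S \<in> sets borel" by (metis emeasure_notin_sets sets zero_neq_one)
    moreover have "AE z in \<mu>. z \<in> S" using S by (intro AE_prob_1) (simp add: measure_def)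
    ultimately show ?thesis
      using True by (intro integral_cong_AE) (auto simp: measurable_cong_sets[OF sets refl])
  qed
  then show ?thesis using assms by simp
next
  case False
  have "integral\<^sup>L \<mu> f = 0" if "\<mu> \<in> prob_on S" for \<mu>
    using that False by (intro not_integrable_integral_eq)
      (auto simp: prob_on_def measurable_cong_sets[of \<mu> borel borel borel])
  then show ?thesis using assms by simp
qed

lemma abs_integral_empirical_diff_le:
  fixes f :: "'a::metric_space \<Rightarrow> real"
  assumes f: "\<And>y z. y \<in> S \<Longrightarrow> z \<in> S \<Longrightarrow> \<bar>f y - f z\<bar> \<le> C * dist y z"
    and "closed S" and N: "1 \<le> N"
    and Y: "\<And>k. k \<in> {1..N} \<Longrightarrow> Y k \<in> S" and Z: "\<And>k. k \<in> {1..N} \<Longrightarrow> Z k \<in> S"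
  shows "\<bar>(\<integral>z. f z \<partial>empirical N Y) - (\<integral>z. f z \<partial>empirical N Z)\<bar>
    \<le> C * (\<Sum>k=1..N. dist (Y k) (Z k)) / N"
proof -
  define g where "g = (\<lambda>z. indicator S z * f z)"
  have lip: "\<bar>C\<bar>-lipschitz_on S f"
  proof (rule lipschitz_onI)
    fix y z assume "y \<in> S" "z \<in> S"
    then have "\<bar>f y - f z\<bar> \<le> C * dist y z" by (rule f)
    also have "\<dots> \<le> \<bar>C\<bar> * dist y z" by (intro mult_right_mono) auto
    finally show "dist (f y) (f z) \<le> \<bar>C\<bar> * dist y z" by (simp add: dist_real_def)
  qed simp
  have g: "g \<in> borel_measurable borel"
    using borel_measurable_continuous_on_indicator[OF _ lipschitz_on_continuous_on[OF lip]] \<open>closed S\<close>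
    by (simp add: g_def)
  have "\<bar>(\<integral>z. f z \<partial>empirical N Y) - (\<integral>z. f z \<partial>empirical N Z)\<bar>
      \<le> \<bar>(\<integral>z. g z \<partial>empirical N Y) - (\<integral>z. g z \<partial>empirical N Z)\<bar>"
    unfolding g_def using assms
    by (intro abs_integral_diff_le_indicator empirical_in_prob_on) auto
  also have "\<dots> = \<bar>\<Sum>k=1..N. g (Y k) - g (Z k)\<bar> / N"
    by (simp add: integral_empirical[OF N g] diff_divide_distrib[symmetric] sum_subtractf)
  also have "\<dots> = \<bar>\<Sum>k=1..N. f (Y k) - f (Z k)\<bar> / N"
    using Y Z by (simp add: g_def)
  also have "\<dots> \<le> (\<Sum>k=1..N. C * dist (Y k) (Z k)) / N"
    using Y Z f by (intro divide_right_mono order.trans[OF sum_abs] sum_mono) auto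
  finally show ?thesis by (simp add: sum_distrib_left)
qed

lemma integral_norm_power_add_le:
  fixes u :: "'a \<Rightarrow> 'b::real_normed_vector" and v :: "'a \<Rightarrow> 'c::real_normed_vector"
  assumes g: "integrable M g"
    and le: "\<And>\<omega>. \<omega> \<in> space M \<Longrightarrow> (norm (u \<omega>) + norm (v \<omega>)) ^ n \<le> g \<omega>"
  shows "(\<integral>\<omega>. norm (u \<omega>) ^ n \<partial>M) + (\<integral>\<omega>. norm (v \<omega>) ^ n \<partial>M) \<le> 2 * integral\<^sup>L M g"
proof -
  have "norm (u \<omega>) ^ n \<le> g \<omega>" "norm (v \<omega>) ^ n \<le> g \<omega>" "0 \<le> g \<omega>" if "\<omega> \<in> space M" for \<omega>
    using le[OF that] order.trans[OF zero_le_power le[OF that]]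
      power_mono[of "norm (u \<omega>)" "norm (u \<omega>) + norm (v \<omega>)" n]
      power_mono[of "norm (v \<omega>)" "norm (u \<omega>) + norm (v \<omega>)" n]
    by auto
  then have "(\<integral>\<omega>. norm (u \<omega>) ^ n \<partial>M) \<le> integral\<^sup>L M g" "(\<integral>\<omega>. norm (v \<omega>) ^ n \<partial>M) \<le> integral\<^sup>L M g"
    using g by (auto intro: integral_mono')
  then show ?thesis by simp
qed

lemma borel_measurable_truncation:
  fixes f :: "'a::second_countable_topology \<Rightarrow> 'a \<Rightarrow> real"
  assumes "closed S" "continuous_on (S \<times> S) (\<lambda>(x, z). f x z)"
  shows "(\<lambda>(x, z). indicator (S \<times> S) (x, z) * f x z) \<in> borel_measurable (borel \<Otimes>\<^sub>M borel)"
proof -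
  have "(\<lambda>p. indicator (S \<times> S) p *\<^sub>R (\<lambda>(x, z). f x z) p) \<in> borel_measurable borel"
    using assms by (intro borel_measurable_continuous_on_indicator borel_closed closed_Times)
  then show ?thesis
    by (simp add: borel_prod case_prod_beta')
qed

section \<open>A fourth-moment law of large numbers\<close>

lemma (in prob_space) integral_indep_var_eq_0:
  fixes g :: "'b \<times> 'b \<Rightarrow> real"
  assumes indep: "indep_var MU U MV V"
    and g: "g \<in> borel_measurable (MU \<Otimes>\<^sub>M MV)" and bound: "\<And>u v. \<bar>g (u, v)\<bar> \<le> B"
    and centred: "\<And>v. v \<in> space MV \<Longrightarrow> (\<integral>u. g (u, v) \<partial>distr M MU U) = 0"
  shows "(\<integral>\<omega>. g (U \<omega>, V \<omega>) \<partial>M) = 0"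
proof -
  define DU where "DU = distr M MU U"
  define DV where "DV = distr M MV V"
  have U: "U \<in> measurable M MU" and V: "V \<in> measurable M MV"
    and product: "DU \<Otimes>\<^sub>M DV = distr M (MU \<Otimes>\<^sub>M MV) (\<lambda>\<omega>. (U \<omega>, V \<omega>))"
    using indep unfolding indep_var_distribution_eq DU_def DV_def by auto
  interpret DU: prob_space DU unfolding DU_def using U by (rule prob_space_distr)
  interpret DV: prob_space DV unfolding DV_def using V by (rule prob_space_distr)
  interpret P: pair_prob_space DU DV ..
  have "integrable (DU \<Otimes>\<^sub>M DV) g"
    using g bound by (intro P.integrable_const_bound[where B=B]) (auto simp: DU_def DV_def)
  then have fubini: "integral\<^sup>L (DU \<Otimes>\<^sub>M DV) g = (\<integral>v. (\<integral>u. g (u, v) \<partial>DU) \<partial>DV)"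
    using P.integral_snd[of "\<lambda>u v. g (u, v)"] by simp
  have "(\<integral>\<omega>. g (U \<omega>, V \<omega>) \<partial>M) = integral\<^sup>L (DU \<Otimes>\<^sub>M DV) g"
    using U V g by (simp add: product integral_distr)
  also have "\<dots> = (\<integral>v. 0 \<partial>DV)"
    unfolding fubini using centred by (intro Bochner_Integration.integral_cong) (auto simp: DU_def DV_def)
  finally show ?thesis by simp
qed

text \<open>Only the terms indexed by matched quadruples survive in the fourth moment of a centred
  empirical mean.\<close>
definition matched_quadruples :: "'a \<Rightarrow> ('a \<times> 'a \<times> 'a \<times> 'a) set" where
  "matched_quadruples i = {(a, b, c, d).
     (a = i \<or> a \<in> {b, c, d}) \<and> (b = i \<or> b \<in> {a, c, d}) \<and>
     (c = i \<or> c \<in> {a, b, d}) \<and> (d = i \<or> d \<in> {a, b, c})}"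

lemma card_matched_quadruples_le:
  assumes "finite F"
  shows "card ((F \<times> F \<times> F \<times> F) \<inter> matched_quadruples i) \<le> 7 * card F ^ 2"
proof -
  let ?pairs = "(\<lambda>(x, y). (x, x, y, y)) ` (F \<times> F) \<union> (\<lambda>(x, y). (x, y, x, y)) ` (F \<times> F)
      \<union> (\<lambda>(x, y). (x, y, y, x)) ` (F \<times> F)"
  let ?triples = "(\<lambda>x. (i, x, x, x)) ` F \<union> (\<lambda>x. (x, i, x, x)) ` F \<union> (\<lambda>x. (x, x, i, x)) ` F
      \<union> (\<lambda>x. (x, x, x, i)) ` F"
  have "card ?pairs \<le> card (F \<times> F) + card (F \<times> F) + card (F \<times> F)"
    using assms by (intro order.trans[OF card_Un_le] add_mono order.trans[OF card_Un_le]
        card_image_le) auto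
  then have pairs: "card ?pairs \<le> 3 * card F ^ 2"
    by (simp add: card_cartesian_product power2_eq_square)
  have "card ?triples \<le> card F + card F + card F + card F"
    using assms by (intro order.trans[OF card_Un_le] add_mono order.trans[OF card_Un_le]
        card_image_le) auto
  then have triples: "card ?triples \<le> 4 * card F"
    by simp
  have "(F \<times> F \<times> F \<times> F) \<inter> matched_quadruples i \<subseteq> ?pairs \<union> ?triples"
    by (auto simp: matched_quadruples_def image_iff)
  then have "card ((F \<times> F \<times> F \<times> F) \<inter> matched_quadruples i) \<le> card (?pairs \<union> ?triples)"
    using assms by (intro card_mono) auto
  also have "\<dots> \<le> card ?pairs + card ?triples"
    by (rule card_Un_le)
  also have "\<dots> \<le> 7 * card F ^ 2"
    using pairs triples le_square[of "card F"] unfolding power2_eq_square by linarith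
  finally show ?thesis .
qed

lemma (in prob_space) fourth_moment_sum_le:
  fixes Y :: "'i \<Rightarrow> 'a \<Rightarrow> real"
  assumes F: "finite F"
    and Y: "\<And>k. k \<in> F \<Longrightarrow> Y k \<in> borel_measurable M"
    and bound: "\<And>k \<omega>. k \<in> F \<Longrightarrow> \<omega> \<in> space M \<Longrightarrow> \<bar>Y k \<omega>\<bar> \<le> B"
    and vanish: "\<And>a b c d. (a, b, c, d) \<in> (F \<times> F \<times> F \<times> F) - matched_quadruples i \<Longrightarrow>
      (\<integral>\<omega>. Y a \<omega> * Y b \<omega> * Y c \<omega> * Y d \<omega> \<partial>M) = 0"
  shows "integrable M (\<lambda>\<omega>. (\<Sum>k\<in>F. Y k \<omega>) ^ 4)"
    and "(\<integral>\<omega>. (\<Sum>k\<in>F. Y k \<omega>) ^ 4 \<partial>M) \<le> 7 * B ^ 4 * card F ^ 2"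
proof -
  define P where "P p \<omega> = (case p of (a, b, c, d) \<Rightarrow> Y a \<omega> * Y b \<omega> * Y c \<omega> * Y d \<omega>)" for p \<omega>
  have expand: "(\<lambda>\<omega>. (\<Sum>k\<in>F. Y k \<omega>) ^ 4) = (\<lambda>\<omega>. \<Sum>p\<in>F \<times> F \<times> F \<times> F. P p \<omega>)"
    by (simp add: power4_sum_expand P_def)
  have P_bound: "\<bar>P p \<omega>\<bar> \<le> B ^ 4" if p: "p \<in> F \<times> F \<times> F \<times> F" and \<omega>: "\<omega> \<in> space M" for p \<omega>
  proof -
    obtain a b c d where p: "p = (a, b, c, d)" and abcd: "a \<in> F" "b \<in> F" "c \<in> F" "d \<in> F"
      using p by auto
    show ?thesis
      using abcd unfolding p P_def by (auto intro!: abs_mult4_le bound \<omega>)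
  qed
  have P_int: "integrable M (P p)" if p: "p \<in> F \<times> F \<times> F \<times> F" for p
  proof (rule integrable_const_bound[where B="B ^ 4"])
    show "P p \<in> borel_measurable M"
      using p Y unfolding P_def[abs_def] by (auto split: prod.splits)
  qed (use P_bound[OF p] in auto)
  then show "integrable M (\<lambda>\<omega>. (\<Sum>k\<in>F. Y k \<omega>) ^ 4)"
    unfolding expand by auto
  have "(\<integral>\<omega>. (\<Sum>k\<in>F. Y k \<omega>) ^ 4 \<partial>M) = (\<Sum>p\<in>F \<times> F \<times> F \<times> F. integral\<^sup>L M (P p))"
    unfolding expand using P_int by (intro Bochner_Integration.integral_sum)
  also have "\<dots> \<le> (\<Sum>p\<in>F \<times> F \<times> F \<times> F. B ^ 4 * indicator (matched_quadruples i) p)"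
  proof (rule sum_mono)
    fix p assume p: "p \<in> F \<times> F \<times> F \<times> F"
    have "integral\<^sup>L M (P p) \<le> B ^ 4"
      using P_int[OF p] P_bound[OF p] by (intro integral_le_const AE_I2) (auto simp: abs_le_iff)
    moreover have "integral\<^sup>L M (P p) = 0" if "p \<notin> matched_quadruples i"
      using vanish p that by (auto simp: P_def[abs_def])
    ultimately show "integral\<^sup>L M (P p) \<le> B ^ 4 * indicator (matched_quadruples i) p"
      by (cases "p \<in> matched_quadruples i") auto
  qed
  also have "\<dots> = B ^ 4 * card ((F \<times> F \<times> F \<times> F) \<inter> matched_quadruples i)"
    using F by (simp add: sum_distrib_left[symmetric] indicator_def sum.If_cases)
  also have "\<dots> \<le> B ^ 4 * real (7 * card F ^ 2)"
    by (intro mult_left_mono of_nat_mono card_matched_quadruples_le F) (simp add: zero_le_even_power)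
  finally show "(\<integral>\<omega>. (\<Sum>k\<in>F. Y k \<omega>) ^ 4 \<partial>M) \<le> 7 * B ^ 4 * card F ^ 2"
    by simp
qed

lemma bounded_kernel_integral:
  fixes \<psi> :: "'a::topological_space \<Rightarrow> 'a \<Rightarrow> real"
  assumes "prob_space M" and sets: "sets M = sets borel"
    and \<psi>: "(\<lambda>(x, z). \<psi> x z) \<in> borel_measurable (borel \<Otimes>\<^sub>M borel)"
    and bound: "\<And>x z. \<bar>\<psi> x z\<bar> \<le> K"
  shows "integrable M (\<psi> x)"
    and "(\<lambda>x. \<integral>z. \<psi> x z \<partial>M) \<in> borel_measurable borel"
    and "\<bar>\<integral>z. \<psi> x z \<partial>M\<bar> \<le> K"
proof -
  interpret prob_space M by fact
  have \<psi>_M: "(\<lambda>(x, z). \<psi> x z) \<in> borel_measurable (borel \<Otimes>\<^sub>M M)"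
    using \<psi> by (simp cong: measurable_cong_sets[OF sets_pair_measure_cong[OF refl sets]])
  have "\<psi> x \<in> borel_measurable M"
    using measurable_Pair2[OF \<psi>_M, of x] by (simp add: measurable_cong_sets[OF sets refl])
  then show int: "integrable M (\<psi> x)"
    using bound by (intro integrable_const_bound[where B=K]) auto
  show "(\<lambda>x. \<integral>z. \<psi> x z \<partial>M) \<in> borel_measurable borel"
    using \<psi>_M by (intro borel_measurable_lebesgue_integral) simp
  have "\<bar>\<integral>z. \<psi> x z \<partial>M\<bar> \<le> (\<integral>z. \<bar>\<psi> x z\<bar> \<partial>M)"
    by (rule integral_abs_bound)
  also have "\<dots> \<le> K"
    using int bound by (intro integral_le_const AE_I2) auto
  finally show "\<bar>\<integral>z. \<psi> x z \<partial>M\<bar> \<le> K" .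
qed

lemma (in prob_space) integral_centred_product_eq_0:
  fixes X :: "'i \<Rightarrow> 'a \<Rightarrow> 'b::topological_space" and \<psi> :: "'b \<Rightarrow> 'b \<Rightarrow> real"
  assumes indep: "indep_vars (\<lambda>_. borel) X I"
    and ident: "\<And>k. k \<in> I \<Longrightarrow> distr M borel (X k) = \<mu>"
    and \<psi>[measurable]: "(\<lambda>(x, z). \<psi> x z) \<in> borel_measurable (borel \<Otimes>\<^sub>M borel)"
    and bound: "\<And>x z. \<bar>\<psi> x z\<bar> \<le> K"
    and Y: "\<And>k \<omega>. Y k \<omega> = \<psi> (X i \<omega>) (X k \<omega>) - (\<integral>z. \<psi> (X i \<omega>) z \<partial>\<mu>)"
    and indices: "{a, i, b, c, d} \<subseteq> I" "a \<notin> {i, b, c, d}"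
  shows "(\<integral>\<omega>. Y a \<omega> * Y b \<omega> * Y c \<omega> * Y d \<omega> \<partial>M) = 0"
proof -
  define S where "S = {i, b, c, d}"
  define U where "U \<omega> = restrict (\<lambda>m. X m \<omega>) {a}" for \<omega>
  define V where "V \<omega> = restrict (\<lambda>m. X m \<omega>) S" for \<omega>
  define h where "h x = (\<integral>z. \<psi> x z \<partial>\<mu>)" for x
  define G where "G v = (\<psi> (v i) (v b) - h (v i)) * (\<psi> (v i) (v c) - h (v i)) * (\<psi> (v i) (v d) - h (v i))"
    for v :: "'i \<Rightarrow> 'b"
  define g where "g = (\<lambda>(u, v). (\<psi> (v i) (u a) - h (v i)) * G v)"
  have indep_UV: "indep_var (PiM {a} (\<lambda>_. borel)) U (PiM S (\<lambda>_. borel)) V"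
    unfolding U_def V_def using indices by (intro indep_var_restrict[OF indep]) (auto simp: S_def)
  then have [measurable]: "U \<in> measurable M (PiM {a} (\<lambda>_. borel))"
    by (simp add: indep_var_distribution_eq)
  have [measurable]: "X a \<in> borel_measurable M"
    using indep indices by (auto simp: indep_vars_def)
  have \<mu>: "prob_space \<mu>" "sets \<mu> = sets borel"
    using ident[of a] indices by (auto intro: prob_space_distr)
  note kernel = bounded_kernel_integral[OF \<mu> \<psi> bound]
  have [measurable]: "h \<in> borel_measurable borel"
    using kernel(2) by (simp add: h_def[abs_def])
  have [measurable]: "g \<in> borel_measurable (PiM {a} (\<lambda>_. borel) \<Otimes>\<^sub>M PiM S (\<lambda>_. borel))"
    unfolding g_def G_def S_def by measurable
  have centred: "\<bar>\<psi> x z - h x\<bar> \<le> 2 * K" for x z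
    using bound[of x z] kernel(3)[of x] by (simp add: h_def)
  have "\<bar>g (u, v)\<bar> \<le> (2 * K) ^ 4" for u v
    unfolding g_def G_def prod.case mult.assoc[symmetric] by (intro abs_mult4_le centred)
  moreover have "(\<integral>u. g (u, v) \<partial>distr M (PiM {a} (\<lambda>_. borel)) U) = 0" for v
  proof -
    have "(\<integral>u. g (u, v) \<partial>distr M (PiM {a} (\<lambda>_. borel)) U) = (\<integral>\<omega>. g (U \<omega>, v) \<partial>M)"
      by (intro integral_distr) (auto simp: g_def)
    also have "\<dots> = (\<integral>z. (\<psi> (v i) z - h (v i)) * G v \<partial>distr M borel (X a))"
      by (subst integral_distr) (auto simp: g_def U_def)
    also have "\<dots> = (\<integral>z. \<psi> (v i) z - h (v i) \<partial>\<mu>) * G v"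
      using ident[of a] indices by simp
    also have "\<dots> = 0"
    proof -
      interpret \<mu>: prob_space \<mu> by (fact \<mu>(1))
      show ?thesis
        using kernel(1) by (simp add: h_def \<mu>.prob_space)
    qed
    finally show ?thesis .
  qed
  ultimately have "(\<integral>\<omega>. g (U \<omega>, V \<omega>) \<partial>M) = 0"
    by (intro integral_indep_var_eq_0[OF indep_UV]) auto
  moreover have "g (U \<omega>, V \<omega>) = Y a \<omega> * Y b \<omega> * Y c \<omega> * Y d \<omega>" for \<omega>
    by (simp add: g_def G_def U_def V_def S_def Y h_def mult.assoc)
  ultimately show ?thesis by simp
qed

lemma (in prob_space) fourth_moment_empirical_mean_le:
  fixes X :: "'i \<Rightarrow> 'a \<Rightarrow> 'b::topological_space" and \<psi> :: "'b \<Rightarrow> 'b \<Rightarrow> real"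
  assumes indep: "indep_vars (\<lambda>_. borel) X I"
    and ident: "\<And>k. k \<in> I \<Longrightarrow> distr M borel (X k) = \<mu>"
    and \<psi>[measurable]: "(\<lambda>(x, z). \<psi> x z) \<in> borel_measurable (borel \<Otimes>\<^sub>M borel)"
    and bound: "\<And>x z. \<bar>\<psi> x z\<bar> \<le> K"
    and F: "finite F" "F \<subseteq> I" "i \<in> F"
  defines "D \<omega> \<equiv> (\<Sum>k\<in>F. \<psi> (X i \<omega>) (X k \<omega>)) / card F - (\<integral>z. \<psi> (X i \<omega>) z \<partial>\<mu>)"
  shows "integrable M (\<lambda>\<omega>. D \<omega> ^ 4)"
    and "(\<integral>\<omega>. D \<omega> ^ 4 \<partial>M) \<le> 112 * K ^ 4 / card F ^ 2"
proof -
  define h where "h x = (\<integral>z. \<psi> x z \<partial>\<mu>)" for x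
  define Y where "Y k \<omega> = \<psi> (X i \<omega>) (X k \<omega>) - h (X i \<omega>)" for k \<omega>
  have n: "0 < real (card F)" using F by (auto simp: card_gt_0_iff)
  have X: "X k \<in> borel_measurable M" if "k \<in> I" for k
    using indep that by (auto simp: indep_vars_def)
  have iI: "i \<in> I" using F by auto
  have Xi[measurable]: "X i \<in> borel_measurable M" using X[OF iI] .
  have \<mu>: "prob_space \<mu>" "sets \<mu> = sets borel"
    using ident[OF iI] by (auto intro: prob_space_distr)
  note kernel = bounded_kernel_integral[OF \<mu> \<psi> bound]
  have [measurable]: "h \<in> borel_measurable borel"
    using kernel(2) by (simp add: h_def[abs_def])
  have D: "D \<omega> ^ 4 = (\<Sum>k\<in>F. Y k \<omega>) ^ 4 / card F ^ 4" for \<omega>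
    using n by (simp add: D_def Y_def h_def sum_subtractf field_simps power_divide)
  have Y_meas: "Y k \<in> borel_measurable M" if "k \<in> F" for k
  proof -
    have [measurable]: "X k \<in> borel_measurable M" using that F X by auto
    show ?thesis unfolding Y_def by measurable
  qed
  have Y_bound: "\<bar>Y k \<omega>\<bar> \<le> 2 * K" for k \<omega>
    using bound[of "X i \<omega>" "X k \<omega>"] kernel(3)[of "X i \<omega>"] by (simp add: Y_def h_def)
  have vanish: "(\<integral>\<omega>. Y a \<omega> * Y b \<omega> * Y c \<omega> * Y d \<omega> \<partial>M) = 0"
    if "(a, b, c, d) \<in> F \<times> F \<times> F \<times> F - matched_quadruples i" for a b c d
  proof -
    have "{a, b, c, d, i} \<subseteq> I" and
      "(a \<notin> {i, b, c, d}) \<or> (b \<notin> {i, a, c, d}) \<or> (c \<notin> {i, a, b, d}) \<or> (d \<notin> {i, a, b, c})"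
      using that F by (auto simp: matched_quadruples_def)
    moreover note centred = integral_centred_product_eq_0[OF indep ident \<psi> bound Y_def[unfolded h_def]]
    ultimately show ?thesis
      using centred[of a b c d] centred[of b a c d] centred[of c a b d] centred[of d a b c]
      by (auto simp: ac_simps insert_commute)
  qed
  note moment = fourth_moment_sum_le[where Y=Y and i=i, OF F(1) Y_meas Y_bound vanish]
  show "integrable M (\<lambda>\<omega>. D \<omega> ^ 4)"
    unfolding D using moment(1) by auto
  have "(\<integral>\<omega>. D \<omega> ^ 4 \<partial>M) \<le> 7 * (2 * K) ^ 4 * card F ^ 2 / card F ^ 4"
    unfolding D using moment(2) n by (auto intro: divide_right_mono)
  also have "\<dots> = 112 * K ^ 4 / card F ^ 2"
    using n by (simp add: field_simps power_mult_distrib eval_nat_numeral)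
  finally show "(\<integral>\<omega>. D \<omega> ^ 4 \<partial>M) \<le> 112 * K ^ 4 / card F ^ 2" .
qed

section \<open>Coefficients that are Lipschitz in the measure argument\<close>

locale mean_field_lipschitz =
  fixes S :: "'a::{metric_space, second_countable_topology} set" and L :: real and J :: nat
    and \<phi> :: "nat \<Rightarrow> 'a \<Rightarrow> 'a \<Rightarrow> real"
    and b :: "'a \<Rightarrow> 'a measure \<Rightarrow> 'b::real_normed_vector"
    and \<sigma> :: "'a \<Rightarrow> 'a measure \<Rightarrow> 'c::real_normed_vector"
  assumes L_nonneg: "0 \<le> L"
    and lipschitz: "\<And>x y \<mu>1 \<mu>2. x \<in> S \<Longrightarrow> y \<in> S \<Longrightarrow> \<mu>1 \<in> prob_on S \<Longrightarrow> \<mu>2 \<in> prob_on S \<Longrightarrow>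
      norm (b x \<mu>1 - b y \<mu>2) + norm (\<sigma> x \<mu>1 - \<sigma> y \<mu>2)
        \<le> L * (dist x y + (\<Sum>j=1..J. \<bar>(\<integral>z. \<phi> j x z \<partial>\<mu>1) - (\<integral>z. \<phi> j x z \<partial>\<mu>2)\<bar>))"
begin

lemma coefficient_diff_empirical_le:
  assumes "closed S"
    and \<phi>: "\<And>j x y z. j \<in> {1..J} \<Longrightarrow> x \<in> S \<Longrightarrow> y \<in> S \<Longrightarrow> z \<in> S \<Longrightarrow>
      \<bar>\<phi> j x y - \<phi> j x z\<bar> \<le> C * dist y z"
    and N: "1 \<le> N" "i \<in> {1..N}"
    and Y: "\<And>k. k \<in> {1..N} \<Longrightarrow> Y k \<in> S" and Z: "\<And>k. k \<in> {1..N} \<Longrightarrow> Z k \<in> S"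
  shows "norm (b (Y i) (empirical N Y) - b (Z i) (empirical N Z))
      + norm (\<sigma> (Y i) (empirical N Y) - \<sigma> (Z i) (empirical N Z))
    \<le> L * (dist (Y i) (Z i) + real J * C * ((\<Sum>k=1..N. dist (Y k) (Z k)) / N))"
proof -
  have "(\<Sum>j=1..J. \<bar>(\<integral>z. \<phi> j (Y i) z \<partial>empirical N Y) - (\<integral>z. \<phi> j (Y i) z \<partial>empirical N Z)\<bar>)
      \<le> (\<Sum>j=1..J. C * (\<Sum>k=1..N. dist (Y k) (Z k)) / N)"
    using assms by (intro sum_mono abs_integral_empirical_diff_le) auto
  then show ?thesis
    using assms L_nonneg
    by (intro order.trans[OF lipschitz] mult_left_mono add_left_mono empirical_in_prob_on) auto
qed

lemma coefficient_diff_empirical_power4_le: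
  assumes "closed S"
    and \<phi>: "\<And>j x y z. j \<in> {1..J} \<Longrightarrow> x \<in> S \<Longrightarrow> y \<in> S \<Longrightarrow> z \<in> S \<Longrightarrow>
      \<bar>\<phi> j x y - \<phi> j x z\<bar> \<le> C * dist y z"
    and N: "1 \<le> N" "i \<in> {1..N}"
    and Y: "\<And>k. k \<in> {1..N} \<Longrightarrow> Y k \<in> S" and Z: "\<And>k. k \<in> {1..N} \<Longrightarrow> Z k \<in> S"
  shows "(norm (b (Y i) (empirical N Y) - b (Z i) (empirical N Z))
      + norm (\<sigma> (Y i) (empirical N Y) - \<sigma> (Z i) (empirical N Z))) ^ 4
    \<le> 8 * L ^ 4 * (dist (Y i) (Z i) ^ 4 + (real J * C) ^ 4 * ((\<Sum>k=1..N. dist (Y k) (Z k) ^ 4) / N))"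
proof -
  define m where "m = (\<Sum>k=1..N. dist (Y k) (Z k)) / N"
  have "(norm (b (Y i) (empirical N Y) - b (Z i) (empirical N Z))
      + norm (\<sigma> (Y i) (empirical N Y) - \<sigma> (Z i) (empirical N Z))) ^ 4
      \<le> (L * (dist (Y i) (Z i) + real J * C * m)) ^ 4"
    unfolding m_def using assms by (intro power_mono coefficient_diff_empirical_le) auto
  also have "\<dots> = L ^ 4 * (dist (Y i) (Z i) + real J * C * m) ^ 4"
    by (simp add: power_mult_distrib)
  also have "\<dots> \<le> L ^ 4 * (8 * (dist (Y i) (Z i) ^ 4 + (real J * C) ^ 4 * m ^ 4))"
    using power4_add_le[of "dist (Y i) (Z i)" "real J * C * m"]
    by (intro mult_left_mono) (simp_all add: power_mult_distrib)
  also have "\<dots> \<le> L ^ 4 * (8 * (dist (Y i) (Z i) ^ 4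
      + (real J * C) ^ 4 * ((\<Sum>k=1..N. dist (Y k) (Z k) ^ 4) / N)))"
    using power_mean_le_mean_power[of "{1..N}" 4 "\<lambda>k. dist (Y k) (Z k)"] N
    by (intro mult_left_mono add_left_mono) (simp_all add: m_def zero_le_even_power)
  finally show ?thesis by (simp add: algebra_simps)
qed

lemma moment_coefficient_diff_empirical_le:
  assumes "prob_space M" and S: "closed S" "bounded S"
    and \<phi>: "\<And>j x y z. j \<in> {1..J} \<Longrightarrow> x \<in> S \<Longrightarrow> y \<in> S \<Longrightarrow> z \<in> S \<Longrightarrow>
      \<bar>\<phi> j x y - \<phi> j x z\<bar> \<le> C * dist y z"
    and N: "1 \<le> N" "i \<in> {1..N}"
    and Y: "\<And>k. k \<in> {1..N} \<Longrightarrow> Y k \<in> borel_measurable M"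
      "\<And>k \<omega>. k \<in> {1..N} \<Longrightarrow> \<omega> \<in> space M \<Longrightarrow> Y k \<omega> \<in> S"
    and Z: "\<And>k. k \<in> {1..N} \<Longrightarrow> Z k \<in> borel_measurable M"
      "\<And>k \<omega>. k \<in> {1..N} \<Longrightarrow> \<omega> \<in> space M \<Longrightarrow> Z k \<omega> \<in> S"
  shows "(\<integral>\<omega>. norm (b (Y i \<omega>) (empirical N (\<lambda>k. Y k \<omega>))
              - b (Z i \<omega>) (empirical N (\<lambda>k. Z k \<omega>))) ^ 4 \<partial>M)
       + (\<integral>\<omega>. norm (\<sigma> (Y i \<omega>) (empirical N (\<lambda>k. Y k \<omega>))
              - \<sigma> (Z i \<omega>) (empirical N (\<lambda>k. Z k \<omega>))) ^ 4 \<partial>M)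
    \<le> 16 * L ^ 4 * (1 + (real J * C) ^ 4) * ((\<integral>\<omega>. dist (Y i \<omega>) (Z i \<omega>) ^ 4 \<partial>M)
         + 1 / N * (\<Sum>k=1..N. \<integral>\<omega>. dist (Y k \<omega>) (Z k \<omega>) ^ 4 \<partial>M))"
proof -
  interpret prob_space M by fact
  define d where "d = (\<lambda>k \<omega>. dist (Y k \<omega>) (Z k \<omega>) ^ 4)"
  define c where "c = (real J * C) ^ 4"
  define g where "g = (\<lambda>\<omega>. 8 * L ^ 4 * (d i \<omega> + c * ((\<Sum>k=1..N. d k \<omega>) / N)))"
  have d_int: "integrable M (d k)" if k: "k \<in> {1..N}" for k
  proof (rule integrable_const_bound[where B="diameter S ^ 4"])
    show "AE \<omega> in M. norm (d k \<omega>) \<le> diameter S ^ 4"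
      using Y(2)[OF k] Z(2)[OF k] S(2)
      by (intro AE_I2) (simp add: d_def power_mono diameter_bounded_bound)
    show "d k \<in> borel_measurable M"
      using Y(1)[OF k] Z(1)[OF k] unfolding d_def by measurable
  qed
  have sum_int: "integrable M (\<lambda>\<omega>. \<Sum>k=1..N. d k \<omega>)"
    using d_int by (intro Bochner_Integration.integrable_sum) auto
  have g_int: "integrable M g"
    unfolding g_def using d_int[OF N(2)] sum_int by auto
  have "integral\<^sup>L M g = 8 * L ^ 4 * (integral\<^sup>L M (d i) + c * ((\<integral>\<omega>. (\<Sum>k=1..N. d k \<omega>) \<partial>M) / N))"
    unfolding g_def using d_int[OF N(2)] sum_int by simp
  also have "(\<integral>\<omega>. (\<Sum>k=1..N. d k \<omega>) \<partial>M) = (\<Sum>k=1..N. integral\<^sup>L M (d k))"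
    using d_int by (intro Bochner_Integration.integral_sum) auto
  finally have g_integral:
    "integral\<^sup>L M g = 8 * L ^ 4 * (integral\<^sup>L M (d i) + c * ((\<Sum>k=1..N. integral\<^sup>L M (d k)) / N))" .
  have "(\<integral>\<omega>. norm (b (Y i \<omega>) (empirical N (\<lambda>k. Y k \<omega>))
              - b (Z i \<omega>) (empirical N (\<lambda>k. Z k \<omega>))) ^ 4 \<partial>M)
       + (\<integral>\<omega>. norm (\<sigma> (Y i \<omega>) (empirical N (\<lambda>k. Y k \<omega>))
              - \<sigma> (Z i \<omega>) (empirical N (\<lambda>k. Z k \<omega>))) ^ 4 \<partial>M)
    \<le> 2 * integral\<^sup>L M g"
  proof (rule integral_norm_power_add_le[OF g_int])
    fix \<omega> assume "\<omega> \<in> space M"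
    then show "(norm (b (Y i \<omega>) (empirical N (\<lambda>k. Y k \<omega>)) - b (Z i \<omega>) (empirical N (\<lambda>k. Z k \<omega>)))
        + norm (\<sigma> (Y i \<omega>) (empirical N (\<lambda>k. Y k \<omega>)) - \<sigma> (Z i \<omega>) (empirical N (\<lambda>k. Z k \<omega>)))) ^ 4
        \<le> g \<omega>"
      using coefficient_diff_empirical_power4_le[OF S(1) \<phi> N, where Y="\<lambda>k. Y k \<omega>" and Z="\<lambda>k. Z k \<omega>"]
        Y(2) Z(2) by (simp add: g_def d_def c_def)
  qed
  also have "\<dots> \<le> 16 * L ^ 4 * (1 + c) * (integral\<^sup>L M (d i) + 1 / N * (\<Sum>k=1..N. integral\<^sup>L M (d k)))"
  proof -
    have "0 \<le> integral\<^sup>L M (d k)" for k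
      by (simp add: d_def)
    then show ?thesis
      unfolding g_integral by (simp add: algebra_simps sum_nonneg c_def zero_le_even_power)
  qed
  finally show ?thesis by (simp add: c_def d_def)
qed

lemma coefficient_diff_measure_power4_le:
  assumes x: "x \<in> S" and \<mu>: "\<mu>1 \<in> prob_on S" "\<mu>2 \<in> prob_on S"
  shows "(norm (b x \<mu>1 - b x \<mu>2) + norm (\<sigma> x \<mu>1 - \<sigma> x \<mu>2)) ^ 4
    \<le> L ^ 4 * real J ^ 3
      * (\<Sum>j=1..J. ((\<integral>z. indicator S z * \<phi> j x z \<partial>\<mu>1) - (\<integral>z. indicator S z * \<phi> j x z \<partial>\<mu>2)) ^ 4)"
proof -
  define \<Delta> where "\<Delta> j = \<bar>(\<integral>z. indicator S z * \<phi> j x z \<partial>\<mu>1) - (\<integral>z. indicator S z * \<phi> j x z \<partial>\<mu>2)\<bar>"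
    for j
  have "(\<Sum>j=1..J. \<bar>(\<integral>z. \<phi> j x z \<partial>\<mu>1) - (\<integral>z. \<phi> j x z \<partial>\<mu>2)\<bar>) \<le> (\<Sum>j=1..J. \<Delta> j)"
    unfolding \<Delta>_def using \<mu> by (intro sum_mono abs_integral_diff_le_indicator)
  then have "norm (b x \<mu>1 - b x \<mu>2) + norm (\<sigma> x \<mu>1 - \<sigma> x \<mu>2) \<le> L * (\<Sum>j=1..J. \<Delta> j)"
    using L_nonneg by (intro order.trans[OF lipschitz[OF x x \<mu>]] mult_left_mono) simp_all
  then have "(norm (b x \<mu>1 - b x \<mu>2) + norm (\<sigma> x \<mu>1 - \<sigma> x \<mu>2)) ^ 4 \<le> (L * (\<Sum>j=1..J. \<Delta> j)) ^ 4"
    by (intro power_mono) auto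
  also have "\<dots> \<le> L ^ 4 * (real J ^ 3 * (\<Sum>j=1..J. \<Delta> j ^ 4))"
    unfolding power_mult_distrib
    by (intro mult_left_mono order.trans[OF sum_power_le_card_power_sum]) auto
  finally show ?thesis
    by (simp add: \<Delta>_def mult.assoc)
qed

lemma coefficient_diff_empirical_law_power4_le:
  assumes S: "closed S" and \<phi>_cont: "\<And>j. j \<in> {1..J} \<Longrightarrow> continuous_on (S \<times> S) (\<lambda>(x, z). \<phi> j x z)"
    and N: "1 \<le> N" and x: "x \<in> S" and Z: "\<And>k. k \<in> {1..N} \<Longrightarrow> Z k \<in> S" and \<mu>: "\<mu> \<in> prob_on S"
  defines "\<psi> j y z \<equiv> indicator (S \<times> S) (y, z) * \<phi> j y z"
  shows "(norm (b x (empirical N Z) - b x \<mu>) + norm (\<sigma> x (empirical N Z) - \<sigma> x \<mu>)) ^ 4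
    \<le> L ^ 4 * real J ^ 3 * (\<Sum>j=1..J. ((\<Sum>k=1..N. \<psi> j x (Z k)) / N - (\<integral>z. \<psi> j x z \<partial>\<mu>)) ^ 4)"
proof -
  have truncation: "(\<lambda>z. indicator S z * \<phi> j x z) = \<psi> j x" for j
    using x by (auto simp: \<psi>_def indicator_def fun_eq_iff)
  have "\<psi> j x \<in> borel_measurable borel" if "j \<in> {1..J}" for j
    using measurable_Pair2[OF borel_measurable_truncation[OF S \<phi>_cont[OF that]], of x]
    by (simp add: \<psi>_def[abs_def])
  then have "(\<Sum>j=1..J. ((\<integral>z. indicator S z * \<phi> j x z \<partial>empirical N Z)
      - (\<integral>z. indicator S z * \<phi> j x z \<partial>\<mu>)) ^ 4)
      = (\<Sum>j=1..J. ((\<Sum>k=1..N. \<psi> j x (Z k)) / N - (\<integral>z. \<psi> j x z \<partial>\<mu>)) ^ 4)"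
    using N by (intro sum.cong) (simp_all add: truncation integral_empirical)
  moreover have "empirical N Z \<in> prob_on S"
    using N Z S by (intro empirical_in_prob_on) auto
  ultimately show ?thesis
    using coefficient_diff_measure_power4_le[OF x _ \<mu>, of "empirical N Z"] by simp
qed

lemma moment_coefficient_diff_law_le:
  fixes X :: "nat \<Rightarrow> 'w \<Rightarrow> 'a"
  assumes "prob_space M" and S: "closed S"
    and \<phi>_cont: "\<And>j. j \<in> {1..J} \<Longrightarrow> continuous_on (S \<times> S) (\<lambda>(x, z). \<phi> j x z)"
    and \<phi>_bound: "\<And>j x z. j \<in> {1..J} \<Longrightarrow> x \<in> S \<Longrightarrow> z \<in> S \<Longrightarrow> \<bar>\<phi> j x z\<bar> \<le> K"
    and indep: "prob_space.indep_vars M (\<lambda>_. borel) X I"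
    and ident: "\<And>k. k \<in> I \<Longrightarrow> distr M borel (X k) = \<mu>"
    and X_in: "\<And>k \<omega>. k \<in> I \<Longrightarrow> \<omega> \<in> space M \<Longrightarrow> X k \<omega> \<in> S"
    and N: "1 \<le> N" "i \<in> {1..N}" "{1..N} \<subseteq> I"
  shows "(\<integral>\<omega>. norm (b (X i \<omega>) (empirical N (\<lambda>k. X k \<omega>)) - b (X i \<omega>) \<mu>) ^ 4 \<partial>M)
       + (\<integral>\<omega>. norm (\<sigma> (X i \<omega>) (empirical N (\<lambda>k. X k \<omega>)) - \<sigma> (X i \<omega>) \<mu>) ^ 4 \<partial>M)
    \<le> 224 * L ^ 4 * real J ^ 4 * K ^ 4 / real N ^ 2"
proof -
  interpret prob_space M by fact
  define \<psi> where "\<psi> j x z = indicator (S \<times> S) (x, z) * \<phi> j x z" for j x z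
  define A where "A j \<omega> = (\<Sum>k\<in>{1..N}. \<psi> j (X i \<omega>) (X k \<omega>)) / card {1..N}
      - (\<integral>z. \<psi> j (X i \<omega>) z \<partial>\<mu>)" for j \<omega>
  define g where "g = (\<lambda>\<omega>. L ^ 4 * real J ^ 3 * (\<Sum>j=1..J. A j \<omega> ^ 4))"
  have iI: "i \<in> I" using N by auto
  have \<mu>: "\<mu> \<in> prob_on S"
    using ident[OF iI] indep iI X_in[OF iI] S
    by (auto simp: indep_vars_def intro!: distr_in_prob_on)
  have \<psi>_meas: "(\<lambda>(x, z). \<psi> j x z) \<in> borel_measurable (borel \<Otimes>\<^sub>M borel)" if "j \<in> {1..J}" for j
    unfolding \<psi>_def using S \<phi>_cont[OF that] by (rule borel_measurable_truncation)
  \<comment> \<open>\<open>\<bar>K\<bar>\<close>: \<open>\<psi>\<close> vanishes off \<open>S \<times> S\<close>, and K may be negative when \<open>\<phi>_bound\<close> is vacuous\<close>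
  have \<psi>_bound: "\<bar>\<psi> j x z\<bar> \<le> \<bar>K\<bar>" if "j \<in> {1..J}" for j x z
    using \<phi>_bound[OF that, of x z] by (auto simp: \<psi>_def indicator_def)
  note moment = fourth_moment_empirical_mean_le[OF indep ident \<psi>_meas \<psi>_bound finite_atLeastAtMost N(3,2),
      folded A_def]
  have g_int: "integrable M g"
    unfolding g_def using moment(1) by auto
  have "integral\<^sup>L M g = L ^ 4 * real J ^ 3 * (\<Sum>j=1..J. \<integral>\<omega>. A j \<omega> ^ 4 \<partial>M)"
    unfolding g_def using moment(1) by (simp add: Bochner_Integration.integral_sum)
  also have "\<dots> \<le> L ^ 4 * real J ^ 3 * (\<Sum>j=1..J. 112 * K ^ 4 / real N ^ 2)"
    using moment(2) by (intro mult_left_mono sum_mono) auto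
  also have "\<dots> = 112 * L ^ 4 * real J ^ 4 * K ^ 4 / real N ^ 2"
    by (simp add: field_simps eval_nat_numeral)
  finally have g_integral: "integral\<^sup>L M g \<le> 112 * L ^ 4 * real J ^ 4 * K ^ 4 / real N ^ 2" .
  have "(\<integral>\<omega>. norm (b (X i \<omega>) (empirical N (\<lambda>k. X k \<omega>)) - b (X i \<omega>) \<mu>) ^ 4 \<partial>M)
       + (\<integral>\<omega>. norm (\<sigma> (X i \<omega>) (empirical N (\<lambda>k. X k \<omega>)) - \<sigma> (X i \<omega>) \<mu>) ^ 4 \<partial>M)
    \<le> 2 * integral\<^sup>L M g"
  proof (rule integral_norm_power_add_le[OF g_int])
    fix \<omega> assume "\<omega> \<in> space M"
    then have X\<omega>: "X k \<omega> \<in> S" if "k \<in> {1..N}" for k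
      using X_in N(3) that by auto
    show "(norm (b (X i \<omega>) (empirical N (\<lambda>k. X k \<omega>)) - b (X i \<omega>) \<mu>)
        + norm (\<sigma> (X i \<omega>) (empirical N (\<lambda>k. X k \<omega>)) - \<sigma> (X i \<omega>) \<mu>)) ^ 4 \<le> g \<omega>"
      using coefficient_diff_empirical_law_power4_le[OF S \<phi>_cont N(1) X\<omega>[OF N(2)] X\<omega> \<mu>]
      unfolding g_def A_def \<psi>_def card_atLeastAtMost diff_Suc_1 .
  qed
  then show ?thesis
    using g_integral by simp
qed

end

theorem lemma4p3:
  fixes T L :: real and G :: "(real^'d) set" and J :: nat
    and b :: "real \<Rightarrow> real^'d \<Rightarrow> (real^'d) measure \<Rightarrow> real^'d"
    and \<sigma> :: "real \<Rightarrow> real^'d \<Rightarrow> (real^'d) measure \<Rightarrow> real^'d^'d"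
    and \<phi> :: "nat \<Rightarrow> real \<Rightarrow> real^'d \<Rightarrow> real^'d \<Rightarrow> real"
    and M :: "'w measure"
    and X :: "nat \<Rightarrow> real \<Rightarrow> 'w \<Rightarrow> real^'d"
    and XN :: "nat \<Rightarrow> nat \<Rightarrow> real \<Rightarrow> 'w \<Rightarrow> real^'d"
  assumes T_pos: "T > 0"
    and G_open: "open G" and G_conn: "connected G" and G_ne: "G \<noteq> {}" and G_bdd: "bounded G"
    and L_pos: "L > 0"
    and b_cont: "\<And>x \<mu>. x \<in> closure G \<Longrightarrow> \<mu> \<in> prob_on (closure G) \<Longrightarrow>
                   continuous_on {0..T} (\<lambda>t. b t x \<mu>)"
    and \<sigma>_cont: "\<And>x \<mu>. x \<in> closure G \<Longrightarrow> \<mu> \<in> prob_on (closure G) \<Longrightarrow>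
                   continuous_on {0..T} (\<lambda>t. \<sigma> t x \<mu>)"
    and \<phi>_cont: "\<And>j. j \<in> {1..J} \<Longrightarrow>
                   continuous_on ({0..T} \<times> closure G \<times> closure G) (\<lambda>(t, x, y). \<phi> j t x y)"
    and \<phi>_lip: "\<exists>C. \<forall>j\<in>{1..J}. \<forall>t\<in>{0..T}. \<forall>x\<in>closure G. \<forall>y\<in>closure G. \<forall>z\<in>closure G.
                   \<bar>\<phi> j t x y - \<phi> j t x z\<bar> \<le> C * dist y z"
    and lip: "\<And>t x y \<mu>1 \<mu>2. t \<in> {0..T} \<Longrightarrow> x \<in> closure G \<Longrightarrow> y \<in> closure G \<Longrightarrow>
                \<mu>1 \<in> prob_on (closure G) \<Longrightarrow> \<mu>2 \<in> prob_on (closure G) \<Longrightarrow>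
                norm (b t x \<mu>1 - b t y \<mu>2) + norm (\<sigma> t x \<mu>1 - \<sigma> t y \<mu>2)
                \<le> L * (dist x y + (\<Sum>j=1..J. \<bar>(\<integral>z. \<phi> j t x z \<partial>\<mu>1) - (\<integral>z. \<phi> j t x z \<partial>\<mu>2)\<bar>))"
    and M_prob: "prob_space M"
    and X_rv: "\<And>i t. i \<ge> 1 \<Longrightarrow> t \<in> {0..T} \<Longrightarrow> X i t \<in> borel_measurable M"
    and X_in: "\<And>i t \<omega>. i \<ge> 1 \<Longrightarrow> t \<in> {0..T} \<Longrightarrow> \<omega> \<in> space M \<Longrightarrow> X i t \<omega> \<in> closure G"
    and X_indep: "\<And>t. t \<in> {0..T} \<Longrightarrow> prob_space.indep_vars M (\<lambda>_. borel) (\<lambda>i. X i t) {1..}"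
    and X_ident: "\<And>i t. i \<ge> 1 \<Longrightarrow> t \<in> {0..T} \<Longrightarrow> distr M borel (X i t) = distr M borel (X 1 t)"
    and XN_rv: "\<And>N i t. 1 \<le> i \<Longrightarrow> i \<le> N \<Longrightarrow> t \<in> {0..T} \<Longrightarrow> XN N i t \<in> borel_measurable M"
    and XN_in: "\<And>N i t \<omega>. 1 \<le> i \<Longrightarrow> i \<le> N \<Longrightarrow> t \<in> {0..T} \<Longrightarrow> \<omega> \<in> space M \<Longrightarrow>
                  XN N i t \<omega> \<in> closure G"
  shows "\<exists>C>0. \<forall>N\<ge>1. \<forall>t\<in>{0..T}. \<forall>i\<in>{1..N}.
     (\<integral>\<omega>. norm (b t (XN N i t \<omega>) (empirical N (\<lambda>j. XN N j t \<omega>))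
                 - b t (X i t \<omega>) (empirical N (\<lambda>j. X j t \<omega>))) ^ 4 \<partial>M)
   + (\<integral>\<omega>. norm (\<sigma> t (XN N i t \<omega>) (empirical N (\<lambda>j. XN N j t \<omega>))
                 - \<sigma> t (X i t \<omega>) (empirical N (\<lambda>j. X j t \<omega>))) ^ 4 \<partial>M)
   \<le> C * ((\<integral>\<omega>. norm (XN N i t \<omega> - X i t \<omega>) ^ 4 \<partial>M)
          + (1 / real N) * (\<Sum>j=1..N. \<integral>\<omega>. norm (XN N j t \<omega> - X j t \<omega>) ^ 4 \<partial>M))
   \<and>
     (\<integral>\<omega>. norm (b t (X i t \<omega>) (empirical N (\<lambda>j. X j t \<omega>))
                 - b t (X i t \<omega>) (distr M borel (X 1 t))) ^ 4 \<partial>M)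
   + (\<integral>\<omega>. norm (\<sigma> t (X i t \<omega>) (empirical N (\<lambda>j. X j t \<omega>))
                 - \<sigma> t (X i t \<omega>) (distr M borel (X 1 t))) ^ 4 \<partial>M)
   \<le> C / (real N) ^ 2"
proof -
  \<comment> \<open>Both estimates are proved at each fixed t and for arbitrary closure G-valued XN.\<close>
  interpret prob_space M by (rule M_prob)
  let ?S = "closure G"
  have S: "closed ?S" "bounded ?S" "compact ?S" using G_bdd by auto
  obtain C where \<phi>_C: "\<And>j t x y z. j \<in> {1..J} \<Longrightarrow> t \<in> {0..T} \<Longrightarrow> x \<in> ?S \<Longrightarrow> y \<in> ?S \<Longrightarrow> z \<in> ?S \<Longrightarrow>
      \<bar>\<phi> j t x y - \<phi> j t x z\<bar> \<le> C * dist y z"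
    using \<phi>_lip by blast
  obtain K where \<phi>_K: "\<And>j t x z. j \<in> {1..J} \<Longrightarrow> t \<in> {0..T} \<Longrightarrow> x \<in> ?S \<Longrightarrow> z \<in> ?S \<Longrightarrow>
      \<bar>\<phi> j t x z\<bar> \<le> K"
  proof -
    have "bounded (\<Union>j\<in>{1..J}. (\<lambda>(t, x, z). \<phi> j t x z) ` ({0..T} \<times> ?S \<times> ?S))"
      using S \<phi>_cont
      by (intro bounded_UN ballI compact_imp_bounded compact_continuous_image compact_Times compact_Icc) auto
    then show thesis
      using that by (fastforce simp: bounded_real)
  qed
  have \<phi>_t: "continuous_on (?S \<times> ?S) (\<lambda>(x, z). \<phi> j t x z)" if "j \<in> {1..J}" "t \<in> {0..T}" for j t
    using continuous_on_compose_Pair[OF \<phi>_cont[OF that(1)] continuous_on_const continuous_on_id] that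
    by auto
  have mf: "mean_field_lipschitz ?S L J (\<lambda>j. \<phi> j t) (b t) (\<sigma> t)" if "t \<in> {0..T}" for t
    using L_pos lip[OF that] by unfold_locales simp_all
  define C1 where "C1 = 16 * L ^ 4 * (1 + (real J * C) ^ 4)"
  define C2 where "C2 = 224 * L ^ 4 * real J ^ 4 * K ^ 4"
  have C1_C2: "0 \<le> C1" "0 \<le> C2" by (simp_all add: C1_def C2_def zero_le_even_power)
  have interacting: "(\<integral>\<omega>. norm (b t (XN N i t \<omega>) (empirical N (\<lambda>j. XN N j t \<omega>))
                 - b t (X i t \<omega>) (empirical N (\<lambda>j. X j t \<omega>))) ^ 4 \<partial>M)
   + (\<integral>\<omega>. norm (\<sigma> t (XN N i t \<omega>) (empirical N (\<lambda>j. XN N j t \<omega>))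
                 - \<sigma> t (X i t \<omega>) (empirical N (\<lambda>j. X j t \<omega>))) ^ 4 \<partial>M)
   \<le> C1 * ((\<integral>\<omega>. norm (XN N i t \<omega> - X i t \<omega>) ^ 4 \<partial>M)
          + (1 / real N) * (\<Sum>j=1..N. \<integral>\<omega>. norm (XN N j t \<omega> - X j t \<omega>) ^ 4 \<partial>M))"
    if N: "1 \<le> N" and t: "t \<in> {0..T}" and i: "i \<in> {1..N}" for N t i
    using mean_field_lipschitz.moment_coefficient_diff_empirical_le[OF mf[OF t] M_prob S(1,2) \<phi>_C[OF _ t] N i,
        where Y = "\<lambda>k. XN N k t" and Z = "\<lambda>k. X k t"] XN_rv XN_in X_rv X_in t
    by (simp add: C1_def dist_norm)
  have law: "(\<integral>\<omega>. norm (b t (X i t \<omega>) (empirical N (\<lambda>j. X j t \<omega>))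
                 - b t (X i t \<omega>) (distr M borel (X 1 t))) ^ 4 \<partial>M)
   + (\<integral>\<omega>. norm (\<sigma> t (X i t \<omega>) (empirical N (\<lambda>j. X j t \<omega>))
                 - \<sigma> t (X i t \<omega>) (distr M borel (X 1 t))) ^ 4 \<partial>M)
   \<le> C2 / (real N) ^ 2"
    if N: "1 \<le> N" and t: "t \<in> {0..T}" and i: "i \<in> {1..N}" for N t i
    using mean_field_lipschitz.moment_coefficient_diff_law_le[OF mf[OF t] M_prob S(1) \<phi>_t[OF _ t] \<phi>_K[OF _ t]
        X_indep[OF t] X_ident[OF _ t] X_in[OF _ t] N i] N
    by (simp add: C2_def)
  show ?thesis
    apply (intro exI[of _ "C1 + C2 + 1"] conjI allI impI ballI)
    subgoal using C1_C2 by linarith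
    subgoal premises prems
      by (rule order.trans[OF interacting[OF prems] mult_right_mono])
        (use C1_C2 in \<open>auto intro!: add_nonneg_nonneg divide_nonneg_nonneg sum_nonneg
          Bochner_Integration.integral_nonneg\<close>)
    subgoal premises prems
      by (rule order.trans[OF law[OF prems] divide_right_mono]) (use C1_C2 in auto)
    done
qed

end
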